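(* Let $\gamma>1$ be a constant, let $\Omega\subset\mathbb{R}^2$ be open, and let $\rho,u,v,p$ be smooth ($C^1$) functions of $(x,y,t)\in\Omega\times[0,T]$ with $\rho>0$ and $p>0$ that satisfy the compressible Euler equations in primitive form \begin{align*} \rho_t + u\rho_x + v\rho_y + \rho(u_x+v_y)&=0,\\ u_t + uu_x + vu_y + p_x/\rho&=0,\\ v_t + uv_x + vv_y + p_y/\rho&=0,\\ p_t + up_x + vp_y + \gamma p(u_x+v_y)&=0. \end{align*} Define $\Phi=(\phi_1,\phi_2,\phi_3,\phi_4)^T=(\sqrt{\rho},\sqrt{\rho}\,u,\sqrt{\rho}\,v,\sqrt{p})^T$ (so $u=\phi_2/\phi_1$, $v=\phi_3/\phi_1$). Then $\Phi$ satisfies $$\Phi_t+(A_1\Phi)_x+A_2\Phi_x+(B_1\Phi)_y+B_2\Phi_y=0,$$ where $$A_1=\frac12\begin{bmatrix}u&0&0&0\\0&u&0&0\\0&0&u&0\\0&2(\gamma-1)\frac{\phi_4}{\phi_1}&0&(2-\gamma)u\end{bmatrix},\quad A_2=\frac12\begin{bmatrix}u&0&0&0\\0&u&0&4\frac{\phi_4}{\phi_1}\\0&0&u&0\\0&0&0&(2-\gamma)u\end{bmatrix},$$ $$B_1=\frac12\begin{bmatrix}v&0&0&0\\0&v&0&0\\0&0&v&0\\0&0&2(\gamma-1)\frac{\phi_4}{\phi_1}&(2-\gamma)v\end{bmatrix},\quad B_2=\frac12\begin{bmatrix}v&0&0&0\\0&v&0&0\\0&0&v&4\frac{\phi_4}{\phi_1}\\0&0&0&(2-\gamma)v\end{bmatrix}.$$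 Moreover, for every constant $\alpha^2>0$ and $P=\mathrm{diag}(\alpha^2,\tfrac{\gamma-1}{2},\tfrac{\gamma-1}{2},1)$, which is symmetric positive definite, one has $PA_2=(PA_1)^T$ and $PB_2=(PB_1)^T$. *)

theory Defs
  imports "HOL-Analysis.Analysis"
begin

text \<open>Partial derivatives of a field F at (x,y,t):
  in x and y ordinary (two-sided) derivatives of the slices, in t the derivative of the
  time slice within the closed time interval [0,T] (one-sided at the end points).\<close>

definition pdx :: "(real \<Rightarrow> real \<Rightarrow> real \<Rightarrow> 'a::real_normed_vector) \<Rightarrow> real \<Rightarrow> real \<Rightarrow> real \<Rightarrow> 'a" where
  "pdx F x y t = vector_derivative (\<lambda>s. F s y t) (at x)"

definition pdy :: "(real \<Rightarrow> real \<Rightarrow> real \<Rightarrow> 'a::real_normed_vector) \<Rightarrow> real \<Rightarrow> real \<Rightarrow> real \<Rightarrow> 'a" where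
  "pdy F x y t = vector_derivative (\<lambda>s. F x s t) (at y)"

definition pdt :: "real \<Rightarrow> (real \<Rightarrow> real \<Rightarrow> real \<Rightarrow> 'a::real_normed_vector) \<Rightarrow> real \<Rightarrow> real \<Rightarrow> real \<Rightarrow> 'a" where
  "pdt T F x y t = vector_derivative (\<lambda>s. F x y s) (at t within {0..T})"

definition domain :: "(real \<times> real) set \<Rightarrow> real \<Rightarrow> (real \<times> real \<times> real) set" where
  "domain \<Omega> T = {(x, y, t). (x, y) \<in> \<Omega> \<and> t \<in> {0..T}}"

definition C1_on :: "(real \<times> real \<times> real) set \<Rightarrow> (real \<Rightarrow> real \<Rightarrow> real \<Rightarrow> real) \<Rightarrow> bool" where
  "C1_on S F \<longleftrightarrow> (\<exists>D :: real \<times> real \<times> real \<Rightarrow> (real \<times> real \<times> real) \<Rightarrow>\<^sub>L real.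
      (\<forall>z\<in>S. ((\<lambda>(x, y, t). F x y t) has_derivative blinfun_apply (D z)) (at z within S))
      \<and> continuous_on S D)"

definition Phi :: "(real \<Rightarrow> real \<Rightarrow> real \<Rightarrow> real) \<Rightarrow> (real \<Rightarrow> real \<Rightarrow> real \<Rightarrow> real) \<Rightarrow>
    (real \<Rightarrow> real \<Rightarrow> real \<Rightarrow> real) \<Rightarrow> (real \<Rightarrow> real \<Rightarrow> real \<Rightarrow> real) \<Rightarrow> real \<Rightarrow> real \<Rightarrow> real \<Rightarrow> real^4" where
  "Phi \<rho> u v p x y t = vector [sqrt (\<rho> x y t), sqrt (\<rho> x y t) * u x y t,
                               sqrt (\<rho> x y t) * v x y t, sqrt (p x y t)]"

definition A1 :: "real \<Rightarrow> real^4 \<Rightarrow> real^4^4" where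
  "A1 \<gamma> \<phi> = (let u = \<phi>$2 / \<phi>$1 in (1/2) *\<^sub>R vector [
      vector [u, 0, 0, 0],
      vector [0, u, 0, 0],
      vector [0, 0, u, 0],
      vector [0, 2*(\<gamma>-1)*(\<phi>$4/\<phi>$1), 0, (2-\<gamma>)*u]])"

definition A2 :: "real \<Rightarrow> real^4 \<Rightarrow> real^4^4" where
  "A2 \<gamma> \<phi> = (let u = \<phi>$2 / \<phi>$1 in (1/2) *\<^sub>R vector [
      vector [u, 0, 0, 0],
      vector [0, u, 0, 4*(\<phi>$4/\<phi>$1)],
      vector [0, 0, u, 0],
      vector [0, 0, 0, (2-\<gamma>)*u]])"

definition B1 :: "real \<Rightarrow> real^4 \<Rightarrow> real^4^4" where
  "B1 \<gamma> \<phi> = (let v = \<phi>$3 / \<phi>$1 in (1/2) *\<^sub>R vector [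
      vector [v, 0, 0, 0],
      vector [0, v, 0, 0],
      vector [0, 0, v, 0],
      vector [0, 0, 2*(\<gamma>-1)*(\<phi>$4/\<phi>$1), (2-\<gamma>) * v]])"

definition B2 :: "real \<Rightarrow> real^4 \<Rightarrow> real^4^4" where
  "B2 \<gamma> \<phi> = (let v = \<phi>$3 / \<phi>$1 in (1/2) *\<^sub>R vector [
      vector [v, 0, 0, 0],
      vector [0, v, 0, 0],
      vector [0, 0, v, 4*(\<phi>$4/\<phi>$1)],
      vector [0, 0, 0, (2-\<gamma>) * v]])"

definition Pmat :: "real \<Rightarrow> real \<Rightarrow> real^4^4" where
  "Pmat \<gamma> \<alpha> = vector [
      vector [\<alpha>^2, 0, 0, 0],
      vector [0, (\<gamma>-1)/2, 0, 0],
      vector [0, 0, (\<gamma>-1)/2, 0],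
      vector [0, 0, 0, 1]]"

end

theory Submission
  imports Defs
begin

text \<open>In the variables R = sqrt rho and Q = sqrt p the continuity and pressure equations become
  the transport equations R_t + u R_x + v R_y + R (u_x + v_y) / 2 = 0 and
  Q_t + u Q_x + v Q_y + gamma Q (u_x + v_y) / 2 = 0, while p_x / rho = 2 Q Q_x / R^2 in the momentum
  equations. Since Phi = (R, R u, R v, Q), A1 Phi Phi = (R u, R u^2, R u v, gamma u Q) / 2 and
  B1 Phi Phi = (R v, R u v, R v^2, gamma v Q) / 2, the product rule turns every component of the
  Phi-system into a linear combination of these four equations.\<close>

lemma has_real_derivative_compose_line:
  assumes "(g has_derivative blinfun_apply D) (at (l x) within S)"
    and "(l has_derivative (\<lambda>h. h *\<^sub>R e)) (at x within U)" and "l ` U \<subseteq> S"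
  shows "((\<lambda>s. g (l s)) has_real_derivative D e) (at x within U)"
proof -
  have "((g \<circ> l) has_derivative (blinfun_apply D \<circ> (\<lambda>h. h *\<^sub>R e))) (at x within U)"
    by (rule diff_chain_within[OF assms(2) has_derivative_subset[OF assms(1)]]) (use assms(3) in auto)
  moreover have "blinfun_apply D \<circ> (\<lambda>h. h *\<^sub>R e) = (*) (D e)"
    by (auto simp: blinfun.scaleR_right)
  ultimately show ?thesis by (simp add: has_field_derivative_def o_def)
qed

lemma has_real_derivative_vector_derivative:
  "(f has_real_derivative c) F \<Longrightarrow> (f has_real_derivative vector_derivative f F) F"
  by (metis differentiableI_vector has_real_derivative_iff_has_vector_derivative vector_derivative_works)

lemma C1_on_domain_partials:
  assumes "C1_on (domain \<Omega> T) F" and "open \<Omega>" and z: "(x, y, t) \<in> domain \<Omega> T"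
  shows "((\<lambda>s. F s y t) has_real_derivative pdx F x y t) (at x)"
    and "((\<lambda>s. F x s t) has_real_derivative pdy F x y t) (at y)"
    and "((\<lambda>s. F x y s) has_real_derivative pdt T F x y t) (at t within {0..T})"
proof -
  let ?F = "\<lambda>(x, y, t). F x y t"
  obtain D where D: "(?F has_derivative blinfun_apply D) (at (x, y, t) within domain \<Omega> T)"
    using assms(1) z unfolding C1_on_def by blast
  let ?Ux = "(\<lambda>s. (s, y)) -` \<Omega>" and ?Uy = "(\<lambda>s. (x, s)) -` \<Omega>"
  have "open ?Ux" "open ?Uy"
    using \<open>open \<Omega>\<close> by (rule open_vimage, intro continuous_intros)+
  moreover have "x \<in> ?Ux" "y \<in> ?Uy"
    using z by (simp_all add: domain_def)
  ultimately have "at x within ?Ux = at x" "at y within ?Uy = at y"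
    by (simp_all only: at_within_open)
  moreover have "((\<lambda>s. ?F (s, y, t)) has_real_derivative D (1, 0, 0)) (at x within ?Ux)"
    by (rule has_real_derivative_compose_line[where l = "\<lambda>s. (s, y, t)", OF D])
       (use z in \<open>auto intro!: derivative_eq_intros simp: zero_prod_def domain_def\<close>)
  moreover have "((\<lambda>s. ?F (x, s, t)) has_real_derivative D (0, 1, 0)) (at y within ?Uy)"
    by (rule has_real_derivative_compose_line[where l = "\<lambda>s. (x, s, t)", OF D])
       (use z in \<open>auto intro!: derivative_eq_intros simp: zero_prod_def domain_def\<close>)
  moreover have "((\<lambda>s. ?F (x, y, s)) has_real_derivative D (0, 0, 1)) (at t within {0..T})"
    by (rule has_real_derivative_compose_line[where l = "\<lambda>s. (x, y, s)", OF D])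
       (use z in \<open>auto intro!: derivative_eq_intros simp: zero_prod_def domain_def\<close>)
  ultimately have "((\<lambda>s. F s y t) has_real_derivative D (1, 0, 0)) (at x)"
    and "((\<lambda>s. F x s t) has_real_derivative D (0, 1, 0)) (at y)"
    and "((\<lambda>s. F x y s) has_real_derivative D (0, 0, 1)) (at t within {0..T})"
    by simp_all
  then show "((\<lambda>s. F s y t) has_real_derivative pdx F x y t) (at x)"
    and "((\<lambda>s. F x s t) has_real_derivative pdy F x y t) (at y)"
    and "((\<lambda>s. F x y s) has_real_derivative pdt T F x y t) (at t within {0..T})"
    unfolding pdx_def pdy_def pdt_def by (blast intro: has_real_derivative_vector_derivative)+
qed

lemma has_real_derivative_sqrt:
  "(f has_real_derivative f') (at s within X) \<Longrightarrow> f s > 0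
    \<Longrightarrow> ((\<lambda>s. sqrt (f s)) has_real_derivative f' / (2 * sqrt (f s))) (at s within X)"
  by (auto intro!: derivative_eq_intros simp: field_simps)

lemma vector_4 [simp]:
  "(vector [a, b, c, d] :: ('a::zero)^4) $ 1 = a"
  "(vector [a, b, c, d] :: ('a::zero)^4) $ 2 = b"
  "(vector [a, b, c, d] :: ('a::zero)^4) $ 3 = c"
  "(vector [a, b, c, d] :: ('a::zero)^4) $ 4 = d"
  unfolding vector_def by simp_all

lemma has_vector_derivative_vector_4:
  assumes "(f1 has_real_derivative d1) F" "(f2 has_real_derivative d2) F"
    and "(f3 has_real_derivative d3) F" "(f4 has_real_derivative d4) F"
  shows "((\<lambda>s. vector [f1 s, f2 s, f3 s, f4 s] :: real^4) has_vector_derivative vector [d1, d2, d3, d4]) F"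
proof -
  have "(vector [a, b, c, d] :: real^4) = a *\<^sub>R axis 1 1 + b *\<^sub>R axis 2 1 + c *\<^sub>R axis 3 1 + d *\<^sub>R axis 4 1"
    for a b c d
    by (simp add: vec_eq_iff forall_4 axis_def)
  with assms show ?thesis
    by (simp only:) (intro has_vector_derivative_add bounded_linear.has_vector_derivative[OF bounded_linear_scaleR_left];
        simp add: has_real_derivative_iff_has_vector_derivative)
qed

lemma has_real_derivative_eventually_nonzero:
  assumes "(R has_real_derivative R') (at s0 within X)" and "R s0 \<noteq> 0"
  shows "eventually (\<lambda>s. s \<in> X \<longrightarrow> R s \<noteq> 0) (nhds s0)"
proof -
  have "eventually (\<lambda>s. R s \<noteq> 0) (at s0 within X)"
    using DERIV_continuous[OF assms(1)] assms(2) by (simp add: continuous_within tendsto_imp_eventually_ne)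
  then show ?thesis
    using assms(2) by (auto simp: eventually_at_filter elim: eventually_mono)
qed

lemma A1_flux:
  "R \<noteq> 0 \<Longrightarrow> A1 g (vector [R, R * a, R * b, Q]) *v vector [R, R * a, R * b, Q]
     = vector [R * a / 2, R * a * a / 2, R * a * b / 2, g * a * Q / 2]"
  by (simp add: A1_def vec_eq_iff forall_4 matrix_vector_mult_def sum_4 field_simps)

lemma B1_flux:
  "R \<noteq> 0 \<Longrightarrow> B1 g (vector [R, R * a, R * b, Q]) *v vector [R, R * a, R * b, Q]
     = vector [R * b / 2, R * a * b / 2, R * b * b / 2, g * b * Q / 2]"
  by (simp add: B1_def vec_eq_iff forall_4 matrix_vector_mult_def sum_4 field_simps)

lemma A2_mult:
  "R \<noteq> 0 \<Longrightarrow> A2 g (vector [R, R * a, R * b, Q]) *v w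
     = vector [a * w$1 / 2, (a * w$2 + 4 * (Q / R) * w$4) / 2, a * w$3 / 2, (2 - g) * a * w$4 / 2]"
  by (simp add: A2_def vec_eq_iff forall_4 matrix_vector_mult_def sum_4 field_simps)

lemma B2_mult:
  "R \<noteq> 0 \<Longrightarrow> B2 g (vector [R, R * a, R * b, Q]) *v w
     = vector [b * w$1 / 2, b * w$2 / 2, (b * w$3 + 4 * (Q / R) * w$4) / 2, (2 - g) * b * w$4 / 2]"
  by (simp add: B2_def vec_eq_iff forall_4 matrix_vector_mult_def sum_4 field_simps)

context
  fixes R a b Q :: "real \<Rightarrow> real" and R' a' b' Q' s0 :: real and X :: "real set"
  assumes R: "(R has_real_derivative R') (at s0 within X)"
    and a: "(a has_real_derivative a') (at s0 within X)"
    and b: "(b has_real_derivative b') (at s0 within X)"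
    and Q: "(Q has_real_derivative Q') (at s0 within X)"
begin

lemma has_vector_derivative_Phi_slice:
  "((\<lambda>s. vector [R s, R s * a s, R s * b s, Q s] :: real^4) has_vector_derivative
     vector [R', R' * a s0 + R s0 * a', R' * b s0 + R s0 * b', Q']) (at s0 within X)"
  by (intro has_vector_derivative_vector_4 R Q) (auto intro!: derivative_eq_intros R a b)

text \<open>A1 divides by the first component, so the flux formula A1_flux holds only where R does not
  vanish; by continuity this is a neighbourhood of s0, which suffices for the derivative.\<close>

lemma has_vector_derivative_A1_flux:
  assumes "R s0 \<noteq> 0"
  shows "((\<lambda>s. A1 g (vector [R s, R s * a s, R s * b s, Q s]) *v vector [R s, R s * a s, R s * b s, Q s])
     has_vector_derivative
       vector [(R' * a s0 + R s0 * a') / 2, (R' * a s0 * a s0 + 2 * R s0 * a s0 * a') / 2,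
               (R' * a s0 * b s0 + R s0 * a' * b s0 + R s0 * a s0 * b') / 2,
               g * (a' * Q s0 + a s0 * Q') / 2]) (at s0 within X)"
proof (rule has_vector_derivative_cong_ev[THEN iffD2])
  show "eventually (\<lambda>s. s \<in> X \<longrightarrow>
      A1 g (vector [R s, R s * a s, R s * b s, Q s]) *v vector [R s, R s * a s, R s * b s, Q s]
      = vector [R s * a s / 2, R s * a s * a s / 2, R s * a s * b s / 2, g * a s * Q s / 2]) (nhds s0)"
    using has_real_derivative_eventually_nonzero[OF R assms] by (auto simp: A1_flux elim: eventually_mono)
  show "((\<lambda>s. vector [R s * a s / 2, R s * a s * a s / 2, R s * a s * b s / 2, g * a s * Q s / 2] :: real^4)
      has_vector_derivative
       vector [(R' * a s0 + R s0 * a') / 2, (R' * a s0 * a s0 + 2 * R s0 * a s0 * a') / 2,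
               (R' * a s0 * b s0 + R s0 * a' * b s0 + R s0 * a s0 * b') / 2,
               g * (a' * Q s0 + a s0 * Q') / 2]) (at s0 within X)"
    by (intro has_vector_derivative_vector_4) (auto intro!: derivative_eq_intros R a b Q simp: field_simps)
qed (use assms in \<open>simp add: A1_flux\<close>)

lemma has_vector_derivative_B1_flux:
  assumes "R s0 \<noteq> 0"
  shows "((\<lambda>s. B1 g (vector [R s, R s * a s, R s * b s, Q s]) *v vector [R s, R s * a s, R s * b s, Q s])
     has_vector_derivative
       vector [(R' * b s0 + R s0 * b') / 2, (R' * a s0 * b s0 + R s0 * a' * b s0 + R s0 * a s0 * b') / 2,
               (R' * b s0 * b s0 + 2 * R s0 * b s0 * b') / 2,
               g * (b' * Q s0 + b s0 * Q') / 2]) (at s0 within X)"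
proof (rule has_vector_derivative_cong_ev[THEN iffD2])
  show "eventually (\<lambda>s. s \<in> X \<longrightarrow>
      B1 g (vector [R s, R s * a s, R s * b s, Q s]) *v vector [R s, R s * a s, R s * b s, Q s]
      = vector [R s * b s / 2, R s * a s * b s / 2, R s * b s * b s / 2, g * b s * Q s / 2]) (nhds s0)"
    using has_real_derivative_eventually_nonzero[OF R assms] by (auto simp: B1_flux elim: eventually_mono)
  show "((\<lambda>s. vector [R s * b s / 2, R s * a s * b s / 2, R s * b s * b s / 2, g * b s * Q s / 2] :: real^4)
      has_vector_derivative
       vector [(R' * b s0 + R s0 * b') / 2, (R' * a s0 * b s0 + R s0 * a' * b s0 + R s0 * a s0 * b') / 2,
               (R' * b s0 * b s0 + 2 * R s0 * b s0 * b') / 2,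
               g * (b' * Q s0 + b s0 * Q') / 2]) (at s0 within X)"
    by (intro has_vector_derivative_vector_4) (auto intro!: derivative_eq_intros R a b Q simp: field_simps)
qed (use assms in \<open>simp add: B1_flux\<close>)

end

text \<open>R and Q stand for sqrt rho and sqrt p: the hypotheses are the Euler equations after
  substituting rho = R^2, rho_x = 2 R R_x, p = Q^2, p_x = 2 Q Q_x, and similarly for y and t.\<close>

lemma Phi_system_identity:
  fixes R Q u v Rx Ry Rt ux uy ut vx vy vt Qx Qy Qt g :: real
  assumes "R \<noteq> 0" and "Q \<noteq> 0"
    and mass: "2 * R * Rt + u * (2 * R * Rx) + v * (2 * R * Ry) + R\<^sup>2 * (ux + vy) = 0"
    and momentum_x: "ut + u * ux + v * uy + 2 * Q * Qx / R\<^sup>2 = 0"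
    and momentum_y: "vt + u * vx + v * vy + 2 * Q * Qy / R\<^sup>2 = 0"
    and energy: "2 * Q * Qt + u * (2 * Q * Qx) + v * (2 * Q * Qy) + g * Q\<^sup>2 * (ux + vy) = 0"
  shows "vector [Rt, Rt * u + R * ut, Rt * v + R * vt, Qt]
      + vector [(Rx * u + R * ux) / 2, (Rx * u * u + 2 * R * u * ux) / 2,
                (Rx * u * v + R * ux * v + R * u * vx) / 2, g * (ux * Q + u * Qx) / 2]
      + A2 g (vector [R, R * u, R * v, Q]) *v vector [Rx, Rx * u + R * ux, Rx * v + R * vx, Qx]
      + vector [(Ry * v + R * vy) / 2, (Ry * u * v + R * uy * v + R * u * vy) / 2,
                (Ry * v * v + 2 * R * v * vy) / 2, g * (vy * Q + v * Qy) / 2]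
      + B2 g (vector [R, R * u, R * v, Q]) *v vector [Ry, Ry * u + R * uy, Ry * v + R * vy, Qy]
      = 0"
proof -
  have "2 * R * (Rt + u * Rx + v * Ry + R * (ux + vy) / 2) = 0"
    and "2 * Q * (Qt + u * Qx + v * Qy + g * Q * (ux + vy) / 2) = 0"
    using mass energy by (simp_all add: field_simps power2_eq_square)
  with \<open>R \<noteq> 0\<close> \<open>Q \<noteq> 0\<close> have "Rt + u * Rx + v * Ry + R * (ux + vy) / 2 = 0"
    and "Qt + u * Qx + v * Qy + g * Q * (ux + vy) / 2 = 0"
    by simp_all
  then have time_derivatives: "Rt = - (u * Rx + v * Ry + R * (ux + vy) / 2)"
    "Qt = - (u * Qx + v * Qy + g * Q * (ux + vy) / 2)"
    "ut = - (u * ux + v * uy + 2 * Q * Qx / R\<^sup>2)" "vt = - (u * vx + v * vy + 2 * Q * Qy / R\<^sup>2)"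
    using momentum_x momentum_y by (simp_all add: eq_neg_iff_add_eq_0 ac_simps)
  from \<open>R \<noteq> 0\<close> show ?thesis
    by (simp add: time_derivatives A2_mult B2_mult vec_eq_iff forall_4 field_simps power2_eq_square)
qed

lemma Phi_system_at:
  assumes C1: "C1_on (domain \<Omega> T) \<rho>" "C1_on (domain \<Omega> T) u" "C1_on (domain \<Omega> T) v" "C1_on (domain \<Omega> T) p"
    and "open \<Omega>" and "T > 0" and z: "(x, y, t) \<in> domain \<Omega> T"
    and pos: "\<rho> x y t > 0" "p x y t > 0"
    and mass: "pdt T \<rho> x y t + u x y t * pdx \<rho> x y t + v x y t * pdy \<rho> x y t
                 + \<rho> x y t * (pdx u x y t + pdy v x y t) = 0"
    and momentum_x: "pdt T u x y t + u x y t * pdx u x y t + v x y t * pdy u x y t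
                 + pdx p x y t / \<rho> x y t = 0"
    and momentum_y: "pdt T v x y t + u x y t * pdx v x y t + v x y t * pdy v x y t
                 + pdy p x y t / \<rho> x y t = 0"
    and energy: "pdt T p x y t + u x y t * pdx p x y t + v x y t * pdy p x y t
                 + \<gamma> * p x y t * (pdx u x y t + pdy v x y t) = 0"
  shows "pdt T (Phi \<rho> u v p) x y t
         + pdx (\<lambda>x' y' t'. A1 \<gamma> (Phi \<rho> u v p x' y' t') *v Phi \<rho> u v p x' y' t') x y t
         + A2 \<gamma> (Phi \<rho> u v p x y t) *v pdx (Phi \<rho> u v p) x y t
         + pdy (\<lambda>x' y' t'. B1 \<gamma> (Phi \<rho> u v p x' y' t') *v Phi \<rho> u v p x' y' t') x y t
         + B2 \<gamma> (Phi \<rho> u v p x y t) *v pdy (Phi \<rho> u v p) x y t = 0"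
proof -
  have "t \<in> {0..T}"
    using z by (simp add: domain_def)
  note partials = C1_on_domain_partials[OF _ \<open>open \<Omega>\<close> z]
  note \<rho>' = partials[OF C1(1), THEN has_real_derivative_sqrt, OF pos(1)]
    and u' = partials[OF C1(2)] and v' = partials[OF C1(3)]
    and p' = partials[OF C1(4), THEN has_real_derivative_sqrt, OF pos(2)]
  have "sqrt (\<rho> x y t) \<noteq> 0"
    using pos by simp
  show ?thesis
    unfolding pdx_def pdy_def pdt_def Phi_def
      vector_derivative_at[OF has_vector_derivative_Phi_slice[OF \<rho>'(1) u'(1) v'(1) p'(1)]]
      vector_derivative_at[OF has_vector_derivative_Phi_slice[OF \<rho>'(2) u'(2) v'(2) p'(2)]]
      vector_derivative_within_closed_interval[OF \<open>T > 0\<close> \<open>t \<in> {0..T}\<close>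
        has_vector_derivative_Phi_slice[OF \<rho>'(3) u'(3) v'(3) p'(3)]]
      vector_derivative_at[OF has_vector_derivative_A1_flux[OF \<rho>'(1) u'(1) v'(1) p'(1) \<open>sqrt (\<rho> x y t) \<noteq> 0\<close>]]
      vector_derivative_at[OF has_vector_derivative_B1_flux[OF \<rho>'(2) u'(2) v'(2) p'(2) \<open>sqrt (\<rho> x y t) \<noteq> 0\<close>]]
    by (rule Phi_system_identity)
      (use mass momentum_x momentum_y energy pos in \<open>simp_all add: pdx_def pdy_def pdt_def\<close>)
qed

lemma Pmat_symmetric: "transpose (Pmat \<gamma> \<alpha>) = Pmat \<gamma> \<alpha>"
  by (simp add: Pmat_def transpose_def vec_eq_iff forall_4)

lemma Pmat_quadratic_form:
  "w \<bullet> (Pmat \<gamma> \<alpha> *v w) = \<alpha>\<^sup>2 * (w$1)\<^sup>2 + (\<gamma> - 1) / 2 * (w$2)\<^sup>2 + (\<gamma> - 1) / 2 * (w$3)\<^sup>2 + (w$4)\<^sup>2"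
  by (simp add: Pmat_def inner_vec_def matrix_vector_mult_def sum_4 power2_eq_square algebra_simps)

lemma Pmat_positive_definite:
  fixes w :: "real^4"
  assumes "\<gamma> > 1" and "\<alpha>\<^sup>2 > 0" and "w \<noteq> 0"
  shows "w \<bullet> (Pmat \<gamma> \<alpha> *v w) > 0"
proof -
  have "w$1 \<noteq> 0 \<or> w$2 \<noteq> 0 \<or> w$3 \<noteq> 0 \<or> w$4 \<noteq> 0"
    using \<open>w \<noteq> 0\<close> by (auto simp: vec_eq_iff forall_4)
  moreover have "(\<gamma> - 1) / 2 > 0"
    using \<open>\<gamma> > 1\<close> by simp
  ultimately show ?thesis
    unfolding Pmat_quadratic_form using \<open>\<alpha>\<^sup>2 > 0\<close>
    by (smt (verit) mult_pos_pos mult_nonneg_nonneg zero_le_power2 zero_less_power2)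
qed

lemma Pmat_A2_eq_transpose_Pmat_A1: "Pmat \<gamma> \<alpha> ** A2 \<gamma> \<phi> = transpose (Pmat \<gamma> \<alpha> ** A1 \<gamma> \<phi>)"
  by (simp add: Pmat_def A1_def A2_def Let_def vec_eq_iff forall_4 matrix_matrix_mult_def transpose_def sum_4)

lemma Pmat_B2_eq_transpose_Pmat_B1: "Pmat \<gamma> \<alpha> ** B2 \<gamma> \<phi> = transpose (Pmat \<gamma> \<alpha> ** B1 \<gamma> \<phi>)"
  by (simp add: Pmat_def B1_def B2_def Let_def vec_eq_iff forall_4 matrix_matrix_mult_def transpose_def sum_4)

theorem mainTheorem1:
  fixes \<gamma> T :: real and \<Omega> :: "(real \<times> real) set"
    and \<rho> u v p :: "real \<Rightarrow> real \<Rightarrow> real \<Rightarrow> real"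
  assumes "\<gamma> > 1" and "T > 0" and "open \<Omega>"
    and "C1_on (domain \<Omega> T) \<rho>" and "C1_on (domain \<Omega> T) u"
    and "C1_on (domain \<Omega> T) v" and "C1_on (domain \<Omega> T) p"
    and "\<forall>(x, y, t) \<in> domain \<Omega> T. \<rho> x y t > 0 \<and> p x y t > 0"
    and "\<forall>(x, y, t) \<in> domain \<Omega> T.
           pdt T \<rho> x y t + u x y t * pdx \<rho> x y t + v x y t * pdy \<rho> x y t
             + \<rho> x y t * (pdx u x y t + pdy v x y t) = 0"
    and "\<forall>(x, y, t) \<in> domain \<Omega> T.
           pdt T u x y t + u x y t * pdx u x y t + v x y t * pdy u x y t
             + pdx p x y t / \<rho> x y t = 0"
    and "\<forall>(x, y, t) \<in> domain \<Omega> T.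
           pdt T v x y t + u x y t * pdx v x y t + v x y t * pdy v x y t
             + pdy p x y t / \<rho> x y t = 0"
    and "\<forall>(x, y, t) \<in> domain \<Omega> T.
           pdt T p x y t + u x y t * pdx p x y t + v x y t * pdy p x y t
             + \<gamma> * p x y t * (pdx u x y t + pdy v x y t) = 0"
  shows "(\<forall>(x, y, t) \<in> domain \<Omega> T.
            pdt T (Phi \<rho> u v p) x y t
            + pdx (\<lambda>x' y' t'. A1 \<gamma> (Phi \<rho> u v p x' y' t') *v Phi \<rho> u v p x' y' t') x y t
            + A2 \<gamma> (Phi \<rho> u v p x y t) *v pdx (Phi \<rho> u v p) x y t
            + pdy (\<lambda>x' y' t'. B1 \<gamma> (Phi \<rho> u v p x' y' t') *v Phi \<rho> u v p x' y' t') x y t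
            + B2 \<gamma> (Phi \<rho> u v p x y t) *v pdy (Phi \<rho> u v p) x y t = 0)
       \<and> (\<forall>\<alpha>::real. \<alpha>^2 > 0 \<longrightarrow>
            transpose (Pmat \<gamma> \<alpha>) = Pmat \<gamma> \<alpha>
            \<and> (\<forall>w::real^4. w \<noteq> 0 \<longrightarrow> w \<bullet> (Pmat \<gamma> \<alpha> *v w) > 0)
            \<and> (\<forall>(x, y, t) \<in> domain \<Omega> T.
                 Pmat \<gamma> \<alpha> ** A2 \<gamma> (Phi \<rho> u v p x y t)
                   = transpose (Pmat \<gamma> \<alpha> ** A1 \<gamma> (Phi \<rho> u v p x y t))
               \<and> Pmat \<gamma> \<alpha> ** B2 \<gamma> (Phi \<rho> u v p x y t)
                   = transpose (Pmat \<gamma> \<alpha> ** B1 \<gamma> (Phi \<rho> u v p x y t))))"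
  using assms
  by (auto intro!: Phi_system_at simp: Pmat_symmetric Pmat_positive_definite
        Pmat_A2_eq_transpose_Pmat_A1 Pmat_B2_eq_transpose_Pmat_B1)

end
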